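(* For each $\theta\in C_h$ there exist exactly two primitive Eisenstein triples, of the form $(a,b,c)$ and $(b-a,b,c)$, such that $$\cos\theta = \frac{|b-2a|}{2c} = \frac{|b-2(b-a)|}{2c}.$$ Conversely, for each primitive Eisenstein triple $(a,b,c)$ there exists a unique $\theta\in C_h$ (hence a unique similarity class $C_h(\theta)$) satisfying this equation.
   Context: $\Lambda_h = \begin{bmatrix} 1 & -1/2 \\ 0 & \sqrt3/2\end{bmatrix}\mathbb{Z}^2$. A full-rank lattice $\Gamma\subset\mathbb{R}^2$ is well-rounded (WR) if it has a basis of vectors of minimal nonzero norm; such a basis can be chosen with angle in $[\pi/3,\pi/2]$ between its vectors, and this angle $\theta(\Gamma)$ is an invariant of $\Gamma$. $\mathrm{WR}(\Lambda_h)$ is the set of full-rank WR sublattices of $\Lambda_h$; $C_h = \{\theta\in[\pi/3,\pi/2] : \theta=\theta(\Gamma)\text{ for some }\Gamma\in\mathrm{WR}(\Lambda_h)\}$ and $C_h(\theta)=\{\Omega\in\mathrm{WR}(\Lambda_h):\theta(\Omega)=\theta\}$. An Eisenstein triple is $(a,b,c)\in\mathbb{Z}^3_{\ge0}\setminus\{0\}$ with $a^2-ab+b^2=c^2$; it is primitive if $a\le b$ and $\gcd(a,b,c)=1$. *)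

theory Defs
  imports "HOL-Analysis.Analysis"
begin

text \<open>We identify \<open>\<real>\<^sup>2\<close> with \<open>\<complex>\<close> (as a real inner product space:
  \<open>x \<bullet> y = Re (x * cnj y)\<close>).\<close>

definition omega_h :: complex where
  "omega_h = Complex (-1/2) (sqrt 3 / 2)"

definition Lambda_h :: "complex set" where
  "Lambda_h = {of_int m + of_int n * omega_h | m n :: int. True}"

definition lat_gen :: "complex \<Rightarrow> complex \<Rightarrow> complex set" where
  "lat_gen u v = {of_int m * u + of_int n * v | m n :: int. True}"

definition lin_indep2 :: "complex \<Rightarrow> complex \<Rightarrow> bool" where
  "lin_indep2 u v \<longleftrightarrow> (\<forall>r s :: real. r *\<^sub>R u + s *\<^sub>R v = 0 \<longrightarrow> r = 0 \<and> s = 0)"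

definition is_basis :: "complex set \<Rightarrow> complex \<Rightarrow> complex \<Rightarrow> bool" where
  "is_basis \<Gamma> u v \<longleftrightarrow> lin_indep2 u v \<and> \<Gamma> = lat_gen u v"

definition full_rank_sublattice :: "complex set \<Rightarrow> bool" where
  "full_rank_sublattice \<Gamma> \<longleftrightarrow> \<Gamma> \<subseteq> Lambda_h \<and> (\<exists>u v. is_basis \<Gamma> u v)"

definition minimal_vec :: "complex set \<Rightarrow> complex \<Rightarrow> bool" where
  "minimal_vec \<Gamma> x \<longleftrightarrow> x \<in> \<Gamma> \<and> x \<noteq> 0 \<and> (\<forall>y\<in>\<Gamma>. y \<noteq> 0 \<longrightarrow> norm x \<le> norm y)"

definition minimal_basis :: "complex set \<Rightarrow> complex \<Rightarrow> complex \<Rightarrow> bool" where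
  "minimal_basis \<Gamma> u v \<longleftrightarrow> is_basis \<Gamma> u v \<and> minimal_vec \<Gamma> u \<and> minimal_vec \<Gamma> v"

definition well_rounded :: "complex set \<Rightarrow> bool" where
  "well_rounded \<Gamma> \<longleftrightarrow> (\<exists>u v. minimal_basis \<Gamma> u v)"

definition WR_h :: "complex set set" where
  "WR_h = {\<Gamma>. full_rank_sublattice \<Gamma> \<and> well_rounded \<Gamma>}"

definition vec_angle :: "complex \<Rightarrow> complex \<Rightarrow> real" where
  "vec_angle u v = arccos ((u \<bullet> v) / (norm u * norm v))"

definition WR_angle :: "complex set \<Rightarrow> real \<Rightarrow> bool" where
  "WR_angle \<Gamma> \<theta> \<longleftrightarrow> pi/3 \<le> \<theta> \<and> \<theta> \<le> pi/2 \<and>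
     (\<exists>u v. minimal_basis \<Gamma> u v \<and> vec_angle u v = \<theta>)"

definition C_h :: "real set" where
  "C_h = {\<theta>. \<exists>\<Gamma>\<in>WR_h. WR_angle \<Gamma> \<theta>}"

definition eisenstein_triple :: "nat \<times> nat \<times> nat \<Rightarrow> bool" where
  "eisenstein_triple t = (case t of (a, b, c) \<Rightarrow>
     (a, b, c) \<noteq> (0, 0, 0) \<and>
     int a ^ 2 - int a * int b + int b ^ 2 = int c ^ 2)"

definition primitive_eisenstein_triple :: "nat \<times> nat \<times> nat \<Rightarrow> bool" where
  "primitive_eisenstein_triple t = (case t of (a, b, c) \<Rightarrow>
     eisenstein_triple (a, b, c) \<and> a \<le> b \<and> gcd (gcd a b) c = 1)"

definition cos_ratio :: "nat \<times> nat \<times> nat \<Rightarrow> real" where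
  "cos_ratio t = (case t of (a, b, c) \<Rightarrow> \<bar>real b - 2 * real a\<bar> / (2 * real c))"

end

theory Submission
  imports Defs
begin

text \<open>A minimal basis \<open>u, v\<close> of a well-rounded sublattice of \<open>\<Lambda>\<^sub>h\<close> consists of two vectors
  \<open>m\<^sub>i + n\<^sub>i\<omega>\<close> of the same norm \<open>N = m\<^sup>2 - mn + n\<^sup>2\<close>, with \<open>2 u \<bullet> v = k \<in> \<int>\<close>. The identity
  \<open>4N\<^sup>2 = k\<^sup>2 + 3D\<^sup>2\<close> for the determinant \<open>D\<close> turns \<open>(u, v)\<close> into an Eisenstein triple
  \<open>(a, b, N)\<close> with \<open>b = |D|\<close>, \<open>b - 2a = k\<close>, so \<open>cos \<theta> = k/(2N) = |b - 2a|/(2c)\<close> after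
  dividing by the gcd. Conversely, for \<open>2a \<le> b\<close> the vectors \<open>c\<close> and \<open>(b - a) + b\<omega>\<close> span a
  well-rounded sublattice with this angle. Since \<open>(b - 2a)\<^sup>2 + 3b\<^sup>2 = 4c\<^sup>2\<close>, the ratio
  \<open>|b - 2a|/c\<close> fixes \<open>b/c\<close>, so a primitive triple is determined by it up to the reflection
  \<open>a \<mapsto> b - a\<close>, which flips the sign of \<open>b - 2a\<close>.\<close>

lemma eisenstein_form_completed_square:
  fixes a b :: "'a::comm_ring_1"
  shows "4 * (a^2 - a*b + b^2) = (b - 2*a)^2 + 3*b^2"
  by (simp add: power2_eq_square algebra_simps)

lemma primitive_eisenstein_tripleD:
  assumes "primitive_eisenstein_triple (a,b,c)"
  shows "a \<le> b" "gcd (gcd a b) c = 1"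
    and "int a ^ 2 - int a * int b + int b ^ 2 = int c ^ 2"
    and "(int b - 2 * int a)^2 + 3 * int b ^ 2 = 4 * int c ^ 2"
    and "0 < b" "0 < c"
proof -
  show ab: "a \<le> b" and "gcd (gcd a b) c = 1"
    and eq: "int a ^ 2 - int a * int b + int b ^ 2 = int c ^ 2"
    using assms by (auto simp: primitive_eisenstein_triple_def eisenstein_triple_def)
  show eq2: "(int b - 2 * int a)^2 + 3 * int b ^ 2 = 4 * int c ^ 2"
    using eq eisenstein_form_completed_square[of "int a" "int b"] by simp
  have "(a,b,c) \<noteq> (0,0,0)"
    using assms by (simp add: primitive_eisenstein_triple_def eisenstein_triple_def)
  with ab eq show b: "0 < b" by (cases "b = 0") auto
  have "0 < 3 * int b ^ 2" using b by simp
  then have "0 < 4 * int c ^ 2" using eq2 zero_le_power2[of "int b - 2 * int a"] by linarith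
  then show "0 < c" by (cases "c = 0") auto
qed

lemma primitive_eisenstein_triple_reflect:
  assumes "primitive_eisenstein_triple (a,b,c)"
  shows "primitive_eisenstein_triple (b - a, b, c)"
proof -
  note t = primitive_eisenstein_tripleD[OF assms]
  have "int (b - a) = int b - int a" using t(1) by simp
  then have "int (b - a) ^ 2 - int (b - a) * int b + int b ^ 2 = int c ^ 2"
    using t(3) by (simp add: power2_eq_square algebra_simps)
  moreover have "gcd (b - a) b = gcd a b"
    using t(1) by (rule gcd_diff2_nat)
  ultimately show ?thesis
    using t(2,5) by (auto simp: primitive_eisenstein_triple_def eisenstein_triple_def)
qed

lemma cos_ratio_reflect:
  assumes "a \<le> b"
  shows "cos_ratio (b - a, b, c) = cos_ratio (a, b, c)"
  using assms by (simp add: cos_ratio_def of_nat_diff abs_minus_commute)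

lemma primitive_eisenstein_triple_double_neq:
  assumes "primitive_eisenstein_triple (a,b,c)"
  shows "b \<noteq> 2 * a"
proof
  assume b: "b = 2 * a"
  note t = primitive_eisenstein_tripleD[OF assms]
  have "int (3 * a^2) = int (c^2)"
    using t(3) b by (simp add: power2_eq_square algebra_simps)
  then have c2: "3 * a^2 = c^2" by (simp only: of_nat_eq_iff)
  then have "3 dvd c^2" by (metis dvd_triv_left)
  then have "3 dvd c" using prime_dvd_power_nat[of 3 c 2] by simp
  then obtain d where d: "c = 3 * d" ..
  then have "3 dvd a^2" using c2 by (simp add: power2_eq_square)
  then have "3 dvd a" using prime_dvd_power_nat[of 3 a 2] by simp
  then have "3 dvd gcd (gcd a b) c" using b d by simp
  with t(2) show False by simp
qed

lemma cos_ratio_bounds: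
  assumes "primitive_eisenstein_triple (a,b,c)"
  shows "0 < cos_ratio (a,b,c)" "cos_ratio (a,b,c) \<le> 1/2"
proof -
  note t = primitive_eisenstein_tripleD[OF assms]
  have "real b \<noteq> 2 * real a"
    using primitive_eisenstein_triple_double_neq[OF assms] by linarith
  then show "0 < cos_ratio (a,b,c)" using t(6) by (simp add: cos_ratio_def)
  have "(int b - 2 * int a)^2 \<le> int c ^ 2"
  proof -
    have "\<bar>int b - 2 * int a\<bar> \<le> \<bar>int b\<bar>" using t(1) by simp
    then have "(int b - 2 * int a)^2 \<le> int b ^ 2" by (simp only: abs_le_square_iff)
    then show ?thesis using t(4) by linarith
  qed
  then have "\<bar>int b - 2 * int a\<bar> \<le> \<bar>int c\<bar>" by (simp only: abs_le_square_iff)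
  then have "\<bar>real b - 2 * real a\<bar> \<le> real c" by linarith
  then show "cos_ratio (a,b,c) \<le> 1/2" using t(6) by (simp add: cos_ratio_def)
qed

lemma dvd_of_proportional_coprime:
  fixes a b c a' b' c' :: nat
  assumes "gcd (gcd a b) c = 1" "a * c' = a' * c" "b * c' = b' * c"
  shows "c dvd c'"
proof -
  have "c dvd gcd (gcd (c' * a) (c' * b)) (c' * c)"
    using assms(2,3) by (simp add: gcd_greatest mult.commute)
  also have "gcd (gcd (c' * a) (c' * b)) (c' * c) = c'"
    using assms(1) by (simp flip: gcd_mult_distrib_nat)
  finally show ?thesis .
qed

lemma coprime_triples_proportional_eq:
  fixes a1 b1 c1 a2 b2 c2 :: nat
  assumes "gcd (gcd a1 b1) c1 = 1" "gcd (gcd a2 b2) c2 = 1" "0 < c1"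
    and "a1 * c2 = a2 * c1" "b1 * c2 = b2 * c1"
  shows "(a1,b1,c1) = (a2,b2,c2)"
proof -
  have "c1 dvd c2" using dvd_of_proportional_coprime assms(1,4,5) .
  moreover have "c2 dvd c1" using dvd_of_proportional_coprime assms(2,4,5) by metis
  ultimately have "c1 = c2" by (rule dvd_antisym)
  with assms(3-5) show ?thesis by simp
qed

lemma primitive_eisenstein_triple_eqI:
  assumes p1: "primitive_eisenstein_triple (a1,b1,c1)"
    and p2: "primitive_eisenstein_triple (a2,b2,c2)"
    and x: "(int b1 - 2 * int a1) * int c2 = (int b2 - 2 * int a2) * int c1"
    and b: "int b1 * int c2 = int b2 * int c1"
  shows "(a1,b1,c1) = (a2,b2,c2)"
proof -
  have "int a1 * int c2 = int a2 * int c1" using x b by (simp add: algebra_simps)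
  then have "a1 * c2 = a2 * c1" by (simp flip: of_nat_mult)
  moreover have "b1 * c2 = b2 * c1" using b by (simp flip: of_nat_mult)
  ultimately show ?thesis
    using coprime_triples_proportional_eq primitive_eisenstein_tripleD(2,6)[OF p1]
      primitive_eisenstein_tripleD(2)[OF p2] by metis
qed

lemma primitive_eisenstein_triple_cos_ratio_eq:
  assumes p1: "primitive_eisenstein_triple (a1,b1,c1)"
    and p2: "primitive_eisenstein_triple (a2,b2,c2)"
    and r: "cos_ratio (a1,b1,c1) = cos_ratio (a2,b2,c2)"
  shows "(a2,b2,c2) = (a1,b1,c1) \<or> (a2,b2,c2) = (b1 - a1, b1, c1)"
proof -
  note t1 = primitive_eisenstein_tripleD[OF p1] and t2 = primitive_eisenstein_tripleD[OF p2]
  define x1 where "x1 = int b1 - 2 * int a1"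
  define x2 where "x2 = int b2 - 2 * int a2"
  have "\<bar>real b1 - 2 * real a1\<bar> * real c2 = \<bar>real b2 - 2 * real a2\<bar> * real c1"
    using r t1(6) t2(6) by (simp add: cos_ratio_def field_simps)
  then have "real_of_int (\<bar>x1 * int c2\<bar>) = real_of_int (\<bar>x2 * int c1\<bar>)"
    by (simp add: x1_def x2_def abs_mult)
  then have ax: "\<bar>x1 * int c2\<bar> = \<bar>x2 * int c1\<bar>" by (simp only: of_int_eq_iff)
  have "3 * (int b1 * int c2)^2 = (4 * int c1 ^ 2 - x1 ^ 2) * int c2 ^ 2"
    using t1(4) unfolding x1_def by (simp add: power_mult_distrib)
  also have "\<dots> = 4 * int c1 ^ 2 * int c2 ^ 2 - (x1 * int c2)^2"
    by (simp add: power_mult_distrib algebra_simps)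
  also have "\<dots> = 4 * int c1 ^ 2 * int c2 ^ 2 - (x2 * int c1)^2"
    using ax by (metis power2_abs)
  also have "\<dots> = (4 * int c2 ^ 2 - x2 ^ 2) * int c1 ^ 2"
    by (simp add: power_mult_distrib algebra_simps)
  also have "\<dots> = 3 * (int b2 * int c1)^2"
    using t2(4) unfolding x2_def by (simp add: power_mult_distrib)
  finally have b: "int b1 * int c2 = int b2 * int c1"
    by (simp add: power2_eq_iff_nonneg)
  from ax consider "x1 * int c2 = x2 * int c1" | "- x1 * int c2 = x2 * int c1"
    by (auto simp: abs_eq_iff)
  then show ?thesis
  proof cases
    case 1
    then show ?thesis
      using primitive_eisenstein_triple_eqI[OF p1 p2 _ b] by (simp add: x1_def x2_def)
  next
    case 2
    have "int b1 - 2 * int (b1 - a1) = - x1" using t1(1) by (simp add: x1_def of_nat_diff)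
    then have "(b1 - a1, b1, c1) = (a2,b2,c2)"
      using 2 by (intro primitive_eisenstein_triple_eqI[OF primitive_eisenstein_triple_reflect[OF p1] p2 _ b])
        (simp add: x2_def)
    then show ?thesis by auto
  qed
qed

lemma primitive_eisenstein_triple_of_solution:
  fixes a b c :: nat
  assumes "a \<le> b" "0 < c" "int a ^ 2 - int a * int b + int b ^ 2 = int c ^ 2"
  shows "\<exists>t. primitive_eisenstein_triple t \<and> cos_ratio t = cos_ratio (a,b,c)"
proof -
  define g where "g = gcd (gcd a b) c"
  have g: "0 < g" using assms(2) by (simp add: g_def)
  obtain a' b' c' where abc: "a = g * a'" "b = g * b'" "c = g * c'"
    unfolding g_def by (meson dvd_trans gcd_dvd1 gcd_dvd2 dvdE)
  have "g * 1 = g * gcd (gcd a' b') c'"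
    using g_def unfolding abc by (simp add: gcd_mult_distrib_nat)
  then have coprime: "gcd (gcd a' b') c' = 1" using g by (simp only: mult_left_cancel)
  have "int g ^ 2 * (int a' ^ 2 - int a' * int b' + int b' ^ 2) = int g ^ 2 * int c' ^ 2"
    using assms(3) unfolding abc by (simp add: power2_eq_square algebra_simps)
  then have "int a' ^ 2 - int a' * int b' + int b' ^ 2 = int c' ^ 2" using g by simp
  moreover have "a' \<le> b'" "0 < c'" using assms(1,2) g unfolding abc by auto
  ultimately have "primitive_eisenstein_triple (a',b',c')"
    using coprime by (auto simp: primitive_eisenstein_triple_def eisenstein_triple_def)
  moreover have "cos_ratio (a',b',c') = cos_ratio (a,b,c)"
  proof -
    have "real b - 2 * real a = real g * (real b' - 2 * real a')"
      unfolding abc by (simp add: algebra_simps)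
    then have "\<bar>real b - 2 * real a\<bar> = real g * \<bar>real b' - 2 * real a'\<bar>"
      by (simp add: abs_mult)
    then show ?thesis using g unfolding abc by (simp add: cos_ratio_def)
  qed
  ultimately show ?thesis by blast
qed

lemma Re_Lambda_h: "Re (of_int m + of_int n * omega_h) = real_of_int m - real_of_int n / 2"
  and Im_Lambda_h: "Im (of_int m + of_int n * omega_h) = real_of_int n * sqrt 3 / 2"
  by (simp_all add: omega_h_def)

lemma norm_Lambda_h_power2:
  "(cmod (of_int m + of_int n * omega_h))^2 = real_of_int (m^2 - m*n + n^2)"
  unfolding cmod_power2 Re_Lambda_h Im_Lambda_h by (simp add: power2_eq_square field_simps)

lemma inner_Lambda_h:
  "(of_int m1 + of_int n1 * omega_h) \<bullet> (of_int m2 + of_int n2 * omega_h)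
     = real_of_int (2*m1*m2 + 2*n1*n2 - m1*n2 - m2*n1) / 2"
  unfolding inner_complex_def Re_Lambda_h Im_Lambda_h by (simp add: power2_eq_square field_simps)

lemma lat_gen_subset_Lambda_h:
  assumes "u \<in> Lambda_h" "v \<in> Lambda_h"
  shows "lat_gen u v \<subseteq> Lambda_h"
proof
  fix y assume "y \<in> lat_gen u v"
  then obtain p q where y: "y = of_int p * u + of_int q * v" unfolding lat_gen_def by blast
  obtain m1 n1 m2 n2 where "u = of_int m1 + of_int n1 * omega_h" "v = of_int m2 + of_int n2 * omega_h"
    using assms unfolding Lambda_h_def by blast
  then have "y = of_int (p * m1 + q * m2) + of_int (p * n1 + q * n2) * omega_h"
    unfolding y by (simp add: algebra_simps)
  then show "y \<in> Lambda_h" unfolding Lambda_h_def by blast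
qed

lemma lin_indep2_real_nonreal:
  assumes "Im u = 0" "u \<noteq> 0" "Im v \<noteq> 0"
  shows "lin_indep2 u v"
  unfolding lin_indep2_def
proof (intro allI impI)
  fix r s :: real assume rs: "r *\<^sub>R u + s *\<^sub>R v = 0"
  then have "Im (r *\<^sub>R u + s *\<^sub>R v) = 0" by simp
  then have "s * Im v = 0" using assms(1) by simp
  then have "s = 0" using assms(3) by simp
  then show "r = 0 \<and> s = 0" using rs assms(2) by simp
qed

lemma quadratic_form_abs_ge_one:
  fixes p q :: int
  assumes "(p,q) \<noteq> (0,0)"
  shows "1 \<le> p^2 - \<bar>p*q\<bar> + q^2"
proof -
  have "p^2 - \<bar>p*q\<bar> + q^2 = (\<bar>p\<bar> - \<bar>q\<bar>)^2 + \<bar>p\<bar> * \<bar>q\<bar>"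
    by (simp add: power2_eq_square abs_mult algebra_simps)
  moreover have "1 \<le> (\<bar>p\<bar> - \<bar>q\<bar>)^2 + \<bar>p\<bar> * \<bar>q\<bar>"
  proof (cases "\<bar>p\<bar> = \<bar>q\<bar>")
    case True
    then have "1 \<le> \<bar>p\<bar>" using assms by auto
    then have "1 * 1 \<le> \<bar>p\<bar> * \<bar>q\<bar>" using True by (intro mult_mono) auto
    then show ?thesis using zero_le_power2[of "\<bar>p\<bar> - \<bar>q\<bar>"] by linarith
  next
    case False
    then have "1 \<le> \<bar>\<bar>p\<bar> - \<bar>q\<bar>\<bar>" by linarith
    then have "1 \<le> (\<bar>p\<bar> - \<bar>q\<bar>)^2" using one_le_power[of "\<bar>\<bar>p\<bar> - \<bar>q\<bar>\<bar>" 2] by simp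
    then show ?thesis using mult_nonneg_nonneg[of "\<bar>p\<bar>" "\<bar>q\<bar>"] by linarith
  qed
  ultimately show ?thesis by simp
qed

lemma norm_int_combination_power2:
  "(cmod (of_int p * u + of_int q * v))^2
     = real_of_int p^2 * (cmod u)^2 + 2 * real_of_int p * real_of_int q * (u \<bullet> v)
       + real_of_int q^2 * (cmod v)^2"
  unfolding cmod_power2 inner_complex_def by (simp add: power2_eq_square algebra_simps)

text \<open>For \<open>|u| = |v|\<close> and \<open>|u \<bullet> v| \<le> |u|\<^sup>2/2\<close>, the squared norm of \<open>p u + q v\<close> is at least
  \<open>(p\<^sup>2 - |pq| + q\<^sup>2) |u|\<^sup>2\<close>.\<close>
lemma norm_le_int_combination:
  assumes "cmod u = cmod v" "\<bar>u \<bullet> v\<bar> \<le> (cmod u)^2 / 2" "(p,q) \<noteq> (0,0)"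
  shows "cmod u \<le> cmod (of_int p * u + of_int q * v)"
proof -
  define s where "s = (cmod u)^2"
  have "\<bar>2 * real_of_int p * real_of_int q * (u \<bullet> v)\<bar> = \<bar>real_of_int p * real_of_int q\<bar> * (2 * \<bar>u \<bullet> v\<bar>)"
    by (simp add: abs_mult)
  also have "\<dots> \<le> \<bar>real_of_int p * real_of_int q\<bar> * s"
    using assms(2) unfolding s_def by (intro mult_left_mono) auto
  finally have "- (\<bar>real_of_int p * real_of_int q\<bar> * s) \<le> 2 * real_of_int p * real_of_int q * (u \<bullet> v)"
    by linarith
  then have "s * real_of_int (p^2 - \<bar>p*q\<bar> + q^2) \<le> (cmod (of_int p * u + of_int q * v))^2"
    unfolding norm_int_combination_power2 using assms(1) s_def
    by (simp add: algebra_simps abs_mult)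
  moreover have "s \<le> s * real_of_int (p^2 - \<bar>p*q\<bar> + q^2)"
    using quadratic_form_abs_ge_one[OF assms(3)] s_def
    by (metis mult_left_mono mult.right_neutral of_int_le_iff of_int_1 zero_le_power2)
  ultimately have "(cmod u)^2 \<le> (cmod (of_int p * u + of_int q * v))^2" using s_def by linarith
  then show ?thesis by (rule power2_le_imp_le) simp
qed

lemma minimal_basis_lat_gen:
  assumes "cmod u = cmod v" "\<bar>u \<bullet> v\<bar> \<le> (cmod u)^2 / 2" "u \<noteq> 0" "lin_indep2 u v"
  shows "minimal_basis (lat_gen u v) u v"
proof -
  have mem: "of_int p * u + of_int q * v \<in> lat_gen u v" for p q
    unfolding lat_gen_def by blast
  have min: "cmod u \<le> cmod y" if y: "y \<in> lat_gen u v" and y0: "y \<noteq> 0" for y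
  proof -
    obtain p q where y: "y = of_int p * u + of_int q * v" using y unfolding lat_gen_def by blast
    then have "(p,q) \<noteq> (0,0)" using y0 by auto
    then show ?thesis unfolding y by (rule norm_le_int_combination[OF assms(1,2)])
  qed
  have "u \<in> lat_gen u v" "v \<in> lat_gen u v" using mem[of 1 0] mem[of 0 1] by simp_all
  then show ?thesis
    unfolding minimal_basis_def is_basis_def minimal_vec_def
    using assms min by auto
qed

lemma arccos_in_C_h:
  assumes "u \<in> Lambda_h" "v \<in> Lambda_h" "lin_indep2 u v" "u \<noteq> 0" "cmod u = cmod v"
    and "0 \<le> u \<bullet> v" "u \<bullet> v \<le> (cmod u)^2 / 2"
  shows "arccos ((u \<bullet> v) / (cmod u)^2) \<in> C_h"
proof -
  define \<theta> where "\<theta> = arccos ((u \<bullet> v) / (cmod u)^2)"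
  have mb: "minimal_basis (lat_gen u v) u v"
    using assms by (intro minimal_basis_lat_gen) auto
  then have "lat_gen u v \<in> WR_h"
    unfolding WR_h_def full_rank_sublattice_def well_rounded_def minimal_basis_def
    using lat_gen_subset_Lambda_h[OF assms(1,2)] by blast
  moreover have "vec_angle u v = \<theta>"
    unfolding vec_angle_def \<theta>_def using assms(5) by (simp add: power2_eq_square)
  moreover have "pi/3 \<le> \<theta>" "\<theta> \<le> pi/2"
  proof -
    have "0 \<le> (u \<bullet> v) / (cmod u)^2" "(u \<bullet> v) / (cmod u)^2 \<le> 1/2"
      using assms(4,6,7) by (simp_all add: divide_le_eq)
    then have "arccos (1/2) \<le> \<theta>" and "\<theta> \<le> arccos 0"
      unfolding \<theta>_def by (intro arccos_le_arccos; linarith)+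
    then show "pi/3 \<le> \<theta>" "\<theta> \<le> pi/2" by simp_all
  qed
  ultimately show ?thesis
    unfolding C_h_def WR_angle_def \<theta>_def using mb by blast
qed

lemma arccos_cos_ratio_in_C_h:
  assumes p: "primitive_eisenstein_triple (a,b,c)"
  shows "arccos (cos_ratio (a,b,c)) \<in> C_h"
proof -
  have main: "arccos (cos_ratio (a,b,c)) \<in> C_h"
    if p: "primitive_eisenstein_triple (a,b,c)" and h: "2 * a \<le> b" for a b c
  proof -
    note t = primitive_eisenstein_tripleD[OF p]
    define u :: complex where "u = of_int (int c) + of_int 0 * omega_h"
    define v :: complex where "v = of_int (int b - int a) + of_int (int b) * omega_h"
    have "(cmod u)^2 = real c ^ 2" unfolding u_def norm_Lambda_h_power2 by simp
    moreover have "(cmod v)^2 = real c ^ 2"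
    proof -
      have "(int b - int a)^2 - (int b - int a) * int b + int b^2 = int c ^ 2"
        using t(3) by (simp add: power2_eq_square algebra_simps)
      then show ?thesis unfolding v_def norm_Lambda_h_power2 by (metis of_int_of_nat_eq of_int_power)
    qed
    ultimately have uc: "cmod u = real c" and vc: "cmod v = real c"
      by (simp_all add: power2_eq_iff_nonneg)
    have uv: "u \<bullet> v = real c * (real b - 2 * real a) / 2"
      unfolding u_def v_def inner_Lambda_h by (simp add: algebra_simps)
    have ratio: "cos_ratio (a,b,c) = (u \<bullet> v) / (cmod u)^2"
      using h t(6) unfolding uv uc cos_ratio_def by (simp add: power2_eq_square)
    have "u \<in> Lambda_h" "v \<in> Lambda_h" unfolding u_def v_def Lambda_h_def by blast+
    moreover have "lin_indep2 u v"
      using t(5,6) unfolding u_def v_def by (intro lin_indep2_real_nonreal) (simp_all add: omega_h_def)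
    moreover have "0 \<le> u \<bullet> v" "u \<bullet> v \<le> (cmod u)^2 / 2"
      using cos_ratio_bounds[OF p] uc t(6) unfolding ratio
      by (simp_all add: zero_less_divide_iff divide_le_eq)
    ultimately show ?thesis
      unfolding ratio using uc vc t(6) by (intro arccos_in_C_h) auto
  qed
  show ?thesis
  proof (cases "2 * a \<le> b")
    case True then show ?thesis using main[OF p] by blast
  next
    case False
    then have "2 * (b - a) \<le> b" by simp
    then show ?thesis
      using main[OF primitive_eisenstein_triple_reflect[OF p]]
        cos_ratio_reflect[OF primitive_eisenstein_tripleD(1)[OF p]] by simp
  qed
qed

lemma primitive_eisenstein_triple_of_int_solution:
  fixes A B N :: int
  assumes "0 \<le> A" "A \<le> B" "0 < N" "A^2 - A*B + B^2 = N^2"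
  shows "\<exists>t. primitive_eisenstein_triple t
           \<and> cos_ratio t = real_of_int \<bar>B - 2*A\<bar> / (2 * real_of_int N)"
proof -
  have "nat A \<le> nat B" "0 < nat N"
    and "int (nat A) ^ 2 - int (nat A) * int (nat B) + int (nat B) ^ 2 = int (nat N) ^ 2"
    using assms by simp_all
  then obtain t where "primitive_eisenstein_triple t" "cos_ratio t = cos_ratio (nat A, nat B, nat N)"
    using primitive_eisenstein_triple_of_solution by blast
  moreover have "cos_ratio (nat A, nat B, nat N) = real_of_int \<bar>B - 2*A\<bar> / (2 * real_of_int N)"
    using assms by (simp add: cos_ratio_def)
  ultimately show ?thesis by metis
qed

text \<open>With \<open>N = |u|\<^sup>2 = |v|\<^sup>2\<close>, \<open>k = 2 u \<bullet> v\<close> and \<open>D = m\<^sub>1n\<^sub>2 - m\<^sub>2n\<^sub>1\<close> one has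
  \<open>4N\<^sup>2 = k\<^sup>2 + 3D\<^sup>2\<close>, so \<open>(A, B, N)\<close> with \<open>B = D\<close>, \<open>B - 2A = k\<close> solves \<open>A\<^sup>2 - AB + B\<^sup>2 = N\<^sup>2\<close>.\<close>
lemma primitive_eisenstein_triple_of_equal_norms:
  fixes m1 n1 m2 n2 N k :: int
  assumes "m1^2 - m1*n1 + n1^2 = N" "m2^2 - m2*n2 + n2^2 = N" "0 < N"
    and "k = 2*m1*m2 + 2*n1*n2 - m1*n2 - m2*n1" "0 \<le> k" "k \<le> N"
  shows "\<exists>t. primitive_eisenstein_triple t \<and> cos_ratio t = real_of_int k / (2 * real_of_int N)"
proof -
  have pos_det: "\<exists>t. primitive_eisenstein_triple t \<and> cos_ratio t = real_of_int k / (2 * real_of_int N)"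
    if N1: "m1^2 - m1*n1 + n1^2 = N" and N2: "m2^2 - m2*n2 + n2^2 = N"
      and k: "k = 2*m1*m2 + 2*n1*n2 - m1*n2 - m2*n1" and D: "0 \<le> m1*n2 - m2*n1"
    for m1 n1 m2 n2
  proof -
    define A where "A = m1*n2 - m1*m2 - n1*n2"
    define B where "B = m1*n2 - m2*n1"
    have kAB: "B - 2*A = k" unfolding A_def B_def k by (simp add: algebra_simps)
    have "k^2 + 3*B^2 = 4 * (m1^2 - m1*n1 + n1^2) * (m2^2 - m2*n2 + n2^2)"
      unfolding k B_def by (simp add: power2_eq_square algebra_simps)
    also have "\<dots> = 4 * N^2" unfolding N1 N2 by (simp add: power2_eq_square)
    finally have kBN: "k^2 + 3*B^2 = 4 * N^2" .
    then have eq: "A^2 - A*B + B^2 = N^2"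
      using eisenstein_form_completed_square[of A B] kAB by simp
    have "k^2 \<le> N^2" using assms(5,6) by (simp add: power_mono)
    then have "k^2 \<le> B^2" using kBN by linarith
    then have "k \<le> B" using assms(5) D unfolding B_def by (simp add: abs_le_square_iff[symmetric])
    then have "0 \<le> A" "A \<le> B" using kAB assms(5) by linarith+
    then show ?thesis
      using primitive_eisenstein_triple_of_int_solution[OF _ _ assms(3) eq] kAB assms(5) by simp
  qed
  show ?thesis
  proof (cases "0 \<le> m1*n2 - m2*n1")
    case True
    then show ?thesis using pos_det assms(1,2,4) by blast
  next
    case False
    have "k = 2*m2*m1 + 2*n2*n1 - m2*n1 - m1*n2" using assms(4) by simp
    moreover have "0 \<le> m2*n1 - m1*n2" using False by simp
    ultimately show ?thesis using pos_det[OF assms(2,1)] by blast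
  qed
qed

lemma Lambda_h_equal_norms_cos_ratio:
  assumes "u \<in> Lambda_h" "v \<in> Lambda_h" "u \<noteq> 0" "cmod u = cmod v"
    and "0 \<le> u \<bullet> v" "u \<bullet> v \<le> (cmod u)^2 / 2"
  shows "\<exists>t. primitive_eisenstein_triple t \<and> cos_ratio t = (u \<bullet> v) / (cmod u)^2"
proof -
  obtain m1 n1 m2 n2 where u: "u = of_int m1 + of_int n1 * omega_h"
    and v: "v = of_int m2 + of_int n2 * omega_h"
    using assms(1,2) unfolding Lambda_h_def by blast
  define N where "N = m1^2 - m1*n1 + n1^2"
  define k where "k = 2*m1*m2 + 2*n1*n2 - m1*n2 - m2*n1"
  have Nu: "(cmod u)^2 = real_of_int N" unfolding u N_def by (rule norm_Lambda_h_power2)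
  have "real_of_int (m2^2 - m2*n2 + n2^2) = real_of_int N"
    using Nu assms(4) unfolding v norm_Lambda_h_power2[symmetric] by simp
  then have Nv: "m2^2 - m2*n2 + n2^2 = N" by (simp only: of_int_eq_iff)
  have uv: "u \<bullet> v = real_of_int k / 2" unfolding u v k_def by (rule inner_Lambda_h)
  have "0 < (cmod u)^2" using assms(3) by simp
  then have "0 < N" unfolding Nu by simp
  moreover have "0 \<le> k" "k \<le> N" using assms(5,6) Nu uv by simp_all
  ultimately obtain t where "primitive_eisenstein_triple t"
      "cos_ratio t = real_of_int k / (2 * real_of_int N)"
    using primitive_eisenstein_triple_of_equal_norms[OF N_def[symmetric] Nv _ k_def] by blast
  then show ?thesis unfolding Nu uv by (metis divide_divide_eq_left mult.commute)
qed

lemma C_hE: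
  assumes "\<theta> \<in> C_h"
  obtains u v where "u \<in> Lambda_h" "v \<in> Lambda_h" "u \<noteq> 0" "cmod u = cmod v"
    "cos \<theta> = (u \<bullet> v) / (cmod u)^2" "pi/3 \<le> \<theta>" "\<theta> \<le> pi/2"
proof -
  obtain \<Gamma> u v where \<Gamma>: "\<Gamma> \<in> WR_h" and mb: "minimal_basis \<Gamma> u v"
    and ang: "vec_angle u v = \<theta>" and range: "pi/3 \<le> \<theta>" "\<theta> \<le> pi/2"
    using assms unfolding C_h_def WR_angle_def by blast
  have mu: "minimal_vec \<Gamma> u" and mv: "minimal_vec \<Gamma> v" using mb unfolding minimal_basis_def by auto
  then have "cmod u = cmod v" "u \<noteq> 0" "v \<noteq> 0" "u \<in> \<Gamma>" "v \<in> \<Gamma>"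
    unfolding minimal_vec_def by (auto intro: antisym)
  moreover have "\<Gamma> \<subseteq> Lambda_h" using \<Gamma> unfolding WR_h_def full_rank_sublattice_def by blast
  moreover have "cos \<theta> = (u \<bullet> v) / (cmod u * cmod v)"
  proof -
    have "\<bar>(u \<bullet> v) / (cmod u * cmod v)\<bar> \<le> 1"
      using Cauchy_Schwarz_ineq2[of u v] \<open>u \<noteq> 0\<close> \<open>v \<noteq> 0\<close> by (simp add: abs_div divide_le_eq_1)
    then show ?thesis using ang unfolding vec_angle_def by (auto intro: cos_arccos_abs)
  qed
  ultimately show ?thesis
    using that range by (metis power2_eq_square subsetD)
qed

lemma arccos_cos_C_h:
  assumes "\<theta> \<in> C_h"
  shows "arccos (cos \<theta>) = \<theta>"
proof -
  have "pi/3 \<le> \<theta>" "\<theta> \<le> pi/2" using assms unfolding C_h_def WR_angle_def by auto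
  then show ?thesis by (intro arccos_cos) (simp_all add: pi_ge_zero order_trans[OF _ pi_half_le_two])
qed

lemma cos_arccos_cos_ratio:
  assumes "primitive_eisenstein_triple (a,b,c)"
  shows "cos (arccos (cos_ratio (a,b,c))) = cos_ratio (a,b,c)"
  using cos_ratio_bounds[OF assms] by (intro cos_arccos) auto

lemma C_h_eq_arccos_cos_ratio:
  "C_h = (\<lambda>t. arccos (cos_ratio t)) ` {t. primitive_eisenstein_triple t}"
proof (intro antisym subsetI)
  fix \<theta> assume \<theta>: "\<theta> \<in> C_h"
  then obtain u v where uv: "u \<in> Lambda_h" "v \<in> Lambda_h" "u \<noteq> 0" "cmod u = cmod v"
    and cos: "cos \<theta> = (u \<bullet> v) / (cmod u)^2" and range: "pi/3 \<le> \<theta>" "\<theta> \<le> pi/2"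
    by (rule C_hE)
  have "0 \<le> cos \<theta>" using range by (intro cos_ge_zero) auto
  moreover have "cos \<theta> \<le> cos (pi/3)" using range by (intro cos_monotone_0_pi_le) auto
  ultimately have "0 \<le> u \<bullet> v" "u \<bullet> v \<le> (cmod u)^2 / 2"
    using uv(3) unfolding cos by (simp_all add: zero_le_divide_iff divide_le_eq cos_60)
  then obtain t where "primitive_eisenstein_triple t" "cos_ratio t = cos \<theta>"
    using Lambda_h_equal_norms_cos_ratio[OF uv] cos by auto
  then show "\<theta> \<in> (\<lambda>t. arccos (cos_ratio t)) ` {t. primitive_eisenstein_triple t}"
    using arccos_cos_C_h[OF \<theta>] by (metis image_eqI mem_Collect_eq)
qed (auto intro: arccos_cos_ratio_in_C_h)

lemma primitive_eisenstein_triples_with_cos_ratio: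
  assumes "primitive_eisenstein_triple (a,b,c)"
  shows "{t. primitive_eisenstein_triple t \<and> cos_ratio (a,b,c) = cos_ratio t}
           = {(a,b,c), (b - a, b, c)}"
  using primitive_eisenstein_triple_cos_ratio_eq[OF assms]
    primitive_eisenstein_triple_reflect[OF assms]
    cos_ratio_reflect[OF primitive_eisenstein_tripleD(1)[OF assms]] assms
  by fastforce

theorem corollary4p6:
  shows "(\<forall>\<theta>\<in>C_h. \<exists>a b c.
            (a, b, c) \<noteq> (b - a, b, c) \<and>
            {t. primitive_eisenstein_triple t \<and> cos \<theta> = cos_ratio t} = {(a, b, c), (b - a, b, c)} \<and>
            cos \<theta> = \<bar>real b - 2 * real a\<bar> / (2 * real c) \<and>
            cos \<theta> = \<bar>real b - 2 * real (b - a)\<bar> / (2 * real c))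
       \<and> (\<forall>t. primitive_eisenstein_triple t \<longrightarrow> (\<exists>!\<theta>. \<theta> \<in> C_h \<and> cos \<theta> = cos_ratio t))"
proof (intro conjI ballI allI impI)
  fix \<theta> assume "\<theta> \<in> C_h"
  then obtain a b c where p: "primitive_eisenstein_triple (a,b,c)"
    and \<theta>: "\<theta> = arccos (cos_ratio (a,b,c))"
    unfolding C_h_eq_arccos_cos_ratio by auto
  then have cos: "cos \<theta> = cos_ratio (a,b,c)" using cos_arccos_cos_ratio by simp
  have cos_reflect: "cos \<theta> = cos_ratio (b - a, b, c)"
    using cos cos_ratio_reflect[OF primitive_eisenstein_tripleD(1)[OF p]] by simp
  have "(a, b, c) \<noteq> (b - a, b, c)" using primitive_eisenstein_triple_double_neq[OF p] by auto
  moreover have "{t. primitive_eisenstein_triple t \<and> cos \<theta> = cos_ratio t} = {(a, b, c), (b - a, b, c)}"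
    using primitive_eisenstein_triples_with_cos_ratio[OF p] cos by simp
  moreover have "cos \<theta> = \<bar>real b - 2 * real a\<bar> / (2 * real c)"
    using cos by (simp add: cos_ratio_def)
  moreover have "cos \<theta> = \<bar>real b - 2 * real (b - a)\<bar> / (2 * real c)"
    using cos_reflect by (simp only: cos_ratio_def prod.case)
  ultimately show "\<exists>a b c. (a, b, c) \<noteq> (b - a, b, c) \<and>
      {t. primitive_eisenstein_triple t \<and> cos \<theta> = cos_ratio t} = {(a, b, c), (b - a, b, c)} \<and>
      cos \<theta> = \<bar>real b - 2 * real a\<bar> / (2 * real c) \<and>
      cos \<theta> = \<bar>real b - 2 * real (b - a)\<bar> / (2 * real c)"
    by blast
next
  fix t assume "primitive_eisenstein_triple t"
  then show "\<exists>!\<theta>. \<theta> \<in> C_h \<and> cos \<theta> = cos_ratio t"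
    using arccos_cos_ratio_in_C_h cos_arccos_cos_ratio arccos_cos_C_h
    by (cases t) (metis (no_types, lifting))
qed

end
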